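(* Let $V$ be a finite set and $\{\eta(t),t\ge0\}$ a consistent configuration process on $\Omega$. Let $\mathbf x=(x_1,\dots,x_n)\in V_n$. Then for all $m\in\{1,\dots,n-1\}$, all $\xi\in\Omega_m$ and all $t\ge0$, $$\mathbb E_{\phi(\mathbf x)}[F(\xi,\eta(t))]=\sum_{1\le i_1<\dots<i_m\le n}\mathbb P_{\phi(x_{i_1},\dots,x_{i_m})}\big(\eta(t)=\xi\big).$$
   Context: $\Lambda\subseteq\mathbb N_0$; $\Omega_n=\{\eta\in\Lambda^V:\sum_x\eta_x=n\}$, $\Omega=\bigcup_n\Omega_n$; for $\mathbf y\in V^k$, $\phi(\mathbf y)=\sum_i\delta_{y_i}$; $V_n=\{\mathbf x\in V^n:\phi(\mathbf x)\in\Omega_n\}$. $F(\xi,\eta):=\prod_{j\in V}\binom{\eta_j}{\xi_j}$. A configuration process is a particle-number-conserving Markov process on $\Omega$ with generator $\mathcal L$; $\mathbb P_\eta,\mathbb E_\eta$ denote its law and expectation started from $\eta$. It is consistent if $[\mathcal L,\mathcal A]=0$, where $\mathcal Af(\eta)=\sum_{x\in V}\eta_xf(\eta-\delta_x)$ (terms with $\eta_x=0$ vanish). *)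

theory Defs
  imports "HOL-Analysis.Analysis" "HOL-Library.Multiset"
begin

text \<open>Configurations on a finite site set V (a type of class finite) are maps V \<Rightarrow> nat.
  Lambda is the set of admissible occupation numbers.\<close>

definition Omega_n :: "nat set \<Rightarrow> nat \<Rightarrow> ('v::finite \<Rightarrow> nat) set" where
  "Omega_n Lam n = {\<eta>. (\<forall>x. \<eta> x \<in> Lam) \<and> (\<Sum>x\<in>UNIV. \<eta> x) = n}"

definition Omega :: "nat set \<Rightarrow> ('v::finite \<Rightarrow> nat) set" where
  "Omega Lam = (\<Union>n. Omega_n Lam n)"

definition phi :: "'v list \<Rightarrow> ('v \<Rightarrow> nat)" where
  "phi ys = (\<lambda>v. count (mset ys) v)"

definition V_n :: "nat set \<Rightarrow> nat \<Rightarrow> ('v::finite) list set" where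
  "V_n Lam n = {xs. length xs = n \<and> phi xs \<in> Omega_n Lam n}"

definition Fdual :: "('v::finite \<Rightarrow> nat) \<Rightarrow> ('v \<Rightarrow> nat) \<Rightarrow> real" where
  "Fdual \<xi> \<eta> = (\<Prod>j\<in>UNIV. real (\<eta> j choose \<xi> j))"

text \<open>Generator of a particle-number-conserving Markov jump process on Omega with
  jump rates q \<eta> \<zeta> (from \<eta> to \<zeta>, within the same Omega_n).\<close>
definition gen :: "nat set \<Rightarrow> (('v::finite \<Rightarrow> nat) \<Rightarrow> ('v \<Rightarrow> nat) \<Rightarrow> real)
    \<Rightarrow> (('v \<Rightarrow> nat) \<Rightarrow> real) \<Rightarrow> ('v \<Rightarrow> nat) \<Rightarrow> real" where
  "gen Lam q f \<eta> = (\<Sum>\<zeta>\<in>Omega_n Lam (\<Sum>x\<in>UNIV. \<eta> x). q \<eta> \<zeta> * (f \<zeta> - f \<eta>))"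

definition is_rate :: "nat set \<Rightarrow> (('v::finite \<Rightarrow> nat) \<Rightarrow> ('v \<Rightarrow> nat) \<Rightarrow> real) \<Rightarrow> bool" where
  "is_rate Lam q \<longleftrightarrow> (\<forall>\<eta> \<zeta>. \<eta> \<noteq> \<zeta> \<longrightarrow> q \<eta> \<zeta> \<ge> 0)"

text \<open>Transition semigroup P_t = exp(t L): E_\<eta>[f(\<eta>(t))] (each Omega_n is finite).\<close>
definition expect :: "nat set \<Rightarrow> (('v::finite \<Rightarrow> nat) \<Rightarrow> ('v \<Rightarrow> nat) \<Rightarrow> real)
    \<Rightarrow> real \<Rightarrow> (('v \<Rightarrow> nat) \<Rightarrow> real) \<Rightarrow> ('v \<Rightarrow> nat) \<Rightarrow> real" where
  "expect Lam q t f \<eta> = (\<Sum>k. t ^ k / fact k * ((gen Lam q ^^ k) f) \<eta>)"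

definition prob_at :: "nat set \<Rightarrow> (('v::finite \<Rightarrow> nat) \<Rightarrow> ('v \<Rightarrow> nat) \<Rightarrow> real)
    \<Rightarrow> real \<Rightarrow> ('v \<Rightarrow> nat) \<Rightarrow> ('v \<Rightarrow> nat) \<Rightarrow> real" where
  "prob_at Lam q t \<eta> \<xi> = expect Lam q t (\<lambda>\<zeta>. if \<zeta> = \<xi> then 1 else 0) \<eta>"

definition annih :: "(('v::finite \<Rightarrow> nat) \<Rightarrow> real) \<Rightarrow> ('v \<Rightarrow> nat) \<Rightarrow> real" where
  "annih f \<eta> = (\<Sum>x\<in>UNIV. real (\<eta> x) * f (\<eta>(x := \<eta> x - 1)))"

definition consistent :: "nat set \<Rightarrow> (('v::finite \<Rightarrow> nat) \<Rightarrow> ('v \<Rightarrow> nat) \<Rightarrow> real) \<Rightarrow> bool" where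
  "consistent Lam q \<longleftrightarrow>
     (\<forall>f \<eta>. \<eta> \<in> Omega Lam \<longrightarrow> gen Lam q (annih f) \<eta> = annih (gen Lam q f) \<eta>)"

end

theory Submission
  imports Defs
begin

(* Write j = n - m. On configurations with n particles, j! F(xi, .) coincides with A^j applied to
   the indicator of xi, since removing j particles one at a time reaches xi in exactly
   j! F(xi, eta) ways. On the other hand, labelling the particles of phi(x) by 1..n, A^j applied to
   any function at phi(x) is j! times its sum over the configurations phi(x_I) of the m-subsets I.
   Consistency lets A^j commute with every power of the generator, hence with the semigroup
   exp(tL), and the two descriptions of A^j combine term by term in the exponential series. *)

definition occupation :: "(nat \<Rightarrow> 'v) \<Rightarrow> nat set \<Rightarrow> 'v \<Rightarrow> nat" where
  "occupation f K v = card {i \<in> K. f i = v}"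

lemma phi_nths: "phi (nths xs K) = occupation (nth xs) (K \<inter> {..<length xs})"
proof
  fix v
  have "phi (nths xs K) v = length (filter ((=) v) (nths xs K))"
    unfolding phi_def by (metis length_replicate replicate_count_mset_eq_filter_eq)
  also have "\<dots> = length (filter (\<lambda>p. snd p \<in> K \<and> v = fst p) (zip xs [0..<length xs]))"
    unfolding nths_def filter_map length_map filter_filter o_def ..
  also have "\<dots> = occupation (nth xs) (K \<inter> {..<length xs}) v"
    unfolding length_filter_conv_card occupation_def by (rule arg_cong[where f=card]) auto
  finally show "phi (nths xs K) v = occupation (nth xs) (K \<inter> {..<length xs}) v" .
qed

lemma occupation_Diff_singleton:
  assumes "finite S" "i \<in> S"
  shows "occupation f (S - {i}) = (occupation f S)(f i := occupation f S (f i) - 1)"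
proof
  fix v
  have "{k \<in> S - {i}. f k = v} = {k \<in> S. f k = v} - {i}" by auto
  then show "occupation f (S - {i}) v = ((occupation f S)(f i := occupation f S (f i) - 1)) v"
    using assms by (auto simp: occupation_def)
qed

lemma annih_occupation:
  fixes f :: "nat \<Rightarrow> 'v::finite"
  assumes "finite S"
  shows "annih h (occupation f S) = (\<Sum>i\<in>S. h (occupation f (S - {i})))"
proof -
  let ?remove = "\<lambda>v. (occupation f S)(v := occupation f S v - 1)"
  have "(\<Sum>i\<in>S. h (occupation f (S - {i}))) = (\<Sum>i\<in>S. h (?remove (f i)))"
    by (intro sum.cong refl) (simp add: occupation_Diff_singleton[OF assms])
  also have "\<dots> = (\<Sum>v\<in>UNIV. \<Sum>i | i \<in> S \<and> f i = v. h (?remove (f i)))"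
    by (rule sum.group[symmetric]) (use assms in auto)
  also have "\<dots> = (\<Sum>v\<in>UNIV. real (occupation f S v) * h (?remove v))"
    by (auto simp: occupation_def intro!: sum.cong)
  finally show ?thesis by (simp add: annih_def)
qed

lemma sum_subsets_Diff_singleton:
  fixes g :: "'a set \<Rightarrow> 'b::comm_semiring_1"
  assumes "finite S"
  shows "(\<Sum>i\<in>S. \<Sum>K | K \<subseteq> S - {i} \<and> card K = c. g K)
       = (\<Sum>K | K \<subseteq> S \<and> card K = c. of_nat (card S - c) * g K)"
proof -
  have "(\<Sum>i\<in>S. \<Sum>K | K \<subseteq> S - {i} \<and> card K = c. g K)
      = (\<Sum>i\<in>S. \<Sum>K | K \<in> {K. K \<subseteq> S \<and> card K = c} \<and> i \<notin> K. g K)"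
    by (intro sum.cong) auto
  also have "\<dots> = (\<Sum>K | K \<subseteq> S \<and> card K = c. \<Sum>i | i \<in> S \<and> i \<notin> K. g K)"
    by (rule sum.swap_restrict) (use assms in auto)
  also have "\<dots> = (\<Sum>K | K \<subseteq> S \<and> card K = c. of_nat (card S - c) * g K)"
  proof (intro sum.cong refl)
    fix K assume "K \<in> {K. K \<subseteq> S \<and> card K = c}"
    then have "card (S - K) = card S - c"
      using assms by (auto simp: card_Diff_subset finite_subset)
    then have "card {i. i \<in> S \<and> i \<notin> K} = card S - c"
      by (simp add: set_diff_eq)
    then show "(\<Sum>i | i \<in> S \<and> i \<notin> K. g K) = of_nat (card S - c) * g K"
      by simp
  qed
  finally show ?thesis .
qed

lemma annih_pow_occupation:
  fixes f :: "nat \<Rightarrow> 'v::finite"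
  assumes "finite S" "j \<le> card S"
  shows "(annih ^^ j) h (occupation f S)
       = fact j * (\<Sum>K | K \<subseteq> S \<and> card K = card S - j. h (occupation f K))"
  using assms
proof (induction j arbitrary: S)
  case 0
  then have "{K. K \<subseteq> S \<and> card K = card S} = {S}"
    by (auto dest: card_subset_eq)
  then show ?case by simp
next
  case (Suc j)
  define c where "c = card S - Suc j"
  have "(annih ^^ Suc j) h (occupation f S) = (\<Sum>i\<in>S. (annih ^^ j) h (occupation f (S - {i})))"
    using annih_occupation[OF Suc.prems(1)] by simp
  also have "\<dots> = (\<Sum>i\<in>S. fact j * (\<Sum>K | K \<subseteq> S - {i} \<and> card K = c. h (occupation f K)))"
    using Suc c_def by (intro sum.cong refl) (simp add: Suc.IH)
  also have "\<dots> = fact j * (\<Sum>K | K \<subseteq> S \<and> card K = c. real (Suc j) * h (occupation f K))"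
    using Suc c_def by (simp add: sum_distrib_left[symmetric] sum_subsets_Diff_singleton)
  finally show ?case by (simp add: c_def sum_distrib_left mult_ac)
qed

lemma sum_fun_upd_decr:
  fixes \<eta> :: "'v::finite \<Rightarrow> nat"
  assumes "0 < \<eta> x"
  shows "(\<Sum>y\<in>UNIV. (\<eta>(x := \<eta> x - 1)) y) = (\<Sum>y\<in>UNIV. \<eta> y) - 1"
proof -
  have "(\<Sum>y\<in>UNIV. (\<eta>(x := \<eta> x - 1)) y) = (\<eta> x - 1) + (\<Sum>y\<in>UNIV - {x}. \<eta> y)"
    by (subst sum.remove[of _ x]) (auto intro!: sum.cong)
  moreover have "(\<Sum>y\<in>UNIV. \<eta> y) = \<eta> x + (\<Sum>y\<in>UNIV - {x}. \<eta> y)"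
    by (subst sum.remove[of _ x]) auto
  ultimately show ?thesis using assms by simp
qed

lemma Fdual_eq_0:
  fixes \<xi> \<eta> :: "'v::finite \<Rightarrow> nat"
  assumes "\<eta> y < \<xi> y"
  shows "Fdual \<xi> \<eta> = 0"
  unfolding Fdual_def using assms by (intro prod_zero) auto

lemma Fdual_same_mass:
  fixes \<xi> \<eta> :: "'v::finite \<Rightarrow> nat"
  assumes "(\<Sum>y\<in>UNIV. \<eta> y) = (\<Sum>y\<in>UNIV. \<xi> y)"
  shows "Fdual \<xi> \<eta> = (if \<eta> = \<xi> then 1 else 0)"
proof (cases "\<exists>y. \<eta> y < \<xi> y")
  case True
  then show ?thesis by (auto simp: Fdual_eq_0)
next
  case False
  then have le: "\<forall>y. \<xi> y \<le> \<eta> y" by (auto simp: not_less)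
  then have "\<not> (\<exists>y. \<xi> y < \<eta> y)"
    using assms sum_strict_mono_ex1[of UNIV \<xi> \<eta>] by auto
  with le have "\<eta> = \<xi>" by (auto simp: fun_eq_iff not_less intro: antisym)
  then show ?thesis by (simp add: Fdual_def)
qed

lemma Fdual_remove_particle:
  fixes \<xi> \<eta> :: "'v::finite \<Rightarrow> nat"
  shows "real (\<eta> x) * Fdual \<xi> (\<eta>(x := \<eta> x - 1)) = real (\<eta> x - \<xi> x) * Fdual \<xi> \<eta>"
proof -
  have split: "Fdual \<xi> \<zeta> = real (\<zeta> x choose \<xi> x) * (\<Prod>y\<in>UNIV - {x}. real (\<zeta> y choose \<xi> y))"
    for \<zeta> :: "'v \<Rightarrow> nat"
    unfolding Fdual_def by (subst prod.remove[of _ x]) auto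
  have removed: "Fdual \<xi> (\<eta>(x := \<eta> x - 1))
      = real ((\<eta> x - 1) choose \<xi> x) * (\<Prod>y\<in>UNIV - {x}. real (\<eta> y choose \<xi> y))"
    unfolding split[of "\<eta>(x := \<eta> x - 1)"] by (auto intro!: prod.cong)
  have "real (\<eta> x) * real ((\<eta> x - 1) choose \<xi> x) = real (\<eta> x - \<xi> x) * real (\<eta> x choose \<xi> x)"
    by (metis binomial_absorb_comp of_nat_mult)
  then show ?thesis
    by (simp only: removed split[of \<eta>] mult.assoc[symmetric])
qed

lemma annih_Fdual:
  fixes \<xi> \<eta> :: "'v::finite \<Rightarrow> nat"
  shows "annih (Fdual \<xi>) \<eta> = real ((\<Sum>y\<in>UNIV. \<eta> y) - (\<Sum>y\<in>UNIV. \<xi> y)) * Fdual \<xi> \<eta>"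
proof (cases "\<forall>y. \<xi> y \<le> \<eta> y")
  case True
  have "annih (Fdual \<xi>) \<eta> = real (\<Sum>y\<in>UNIV. \<eta> y - \<xi> y) * Fdual \<xi> \<eta>"
    unfolding annih_def Fdual_remove_particle by (simp add: sum_distrib_right)
  with True show ?thesis by (simp add: sum_subtractf_nat)
next
  case False
  then obtain y where "\<eta> y < \<xi> y" by (auto simp: not_le)
  then have "Fdual \<xi> \<eta> = 0" by (rule Fdual_eq_0)
  then show ?thesis unfolding annih_def Fdual_remove_particle by simp
qed

lemma annih_pow_indicator:
  fixes \<xi> \<eta> :: "'v::finite \<Rightarrow> nat"
  assumes "(\<Sum>y\<in>UNIV. \<eta> y) = (\<Sum>y\<in>UNIV. \<xi> y) + j"
  shows "(annih ^^ j) (\<lambda>\<zeta>. if \<zeta> = \<xi> then 1 else 0) \<eta> = fact j * Fdual \<xi> \<eta>"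
  using assms
proof (induction j arbitrary: \<eta>)
  case 0
  then show ?case by (simp add: Fdual_same_mass)
next
  case (Suc j)
  let ?ind = "\<lambda>\<zeta>. if \<zeta> = \<xi> then 1 else (0::real)"
  have step: "real (\<eta> x) * (annih ^^ j) ?ind (\<eta>(x := \<eta> x - 1))
      = fact j * (real (\<eta> x) * Fdual \<xi> (\<eta>(x := \<eta> x - 1)))" for x
  proof (cases "\<eta> x = 0")
    case False
    then have "(annih ^^ j) ?ind (\<eta>(x := \<eta> x - 1)) = fact j * Fdual \<xi> (\<eta>(x := \<eta> x - 1))"
      using Suc.prems sum_fun_upd_decr[of \<eta> x] by (intro Suc.IH) simp
    then show ?thesis by simp
  qed simp
  have "(annih ^^ Suc j) ?ind \<eta> = fact j * annih (Fdual \<xi>) \<eta>"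
    by (simp only: funpow.simps comp_def annih_def sum_distrib_left step)
  also have "\<dots> = fact (Suc j) * Fdual \<xi> \<eta>"
    using Suc.prems by (simp add: annih_Fdual)
  finally show ?case .
qed

lemma Omega_n_subset_Omega: "Omega_n Lam N \<subseteq> Omega Lam"
  by (auto simp: Omega_def)

lemma Omega_iff: "\<eta> \<in> Omega Lam \<longleftrightarrow> (\<forall>x. \<eta> x \<in> Lam)"
  by (auto simp: Omega_def Omega_n_def)

lemma finite_Omega_n: "finite (Omega_n Lam N :: ('v::finite \<Rightarrow> nat) set)"
proof (rule finite_subset)
  show "Omega_n Lam N \<subseteq> Pi\<^sub>E (UNIV :: 'v set) (\<lambda>_. {..N})"
  proof
    fix \<eta> :: "'v \<Rightarrow> nat" assume "\<eta> \<in> Omega_n Lam N"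
    then have "\<eta> x \<le> N" for x
      unfolding Omega_n_def using member_le_sum[of x UNIV \<eta>] by auto
    then show "\<eta> \<in> Pi\<^sub>E (UNIV :: 'v set) (\<lambda>_. {..N})" by (simp add: PiE_UNIV_domain)
  qed
qed (simp add: finite_PiE)

lemma Omega_remove_particle:
  assumes Lam_down: "\<And>k j. k \<in> Lam \<Longrightarrow> j \<le> k \<Longrightarrow> j \<in> Lam"
    and "\<eta> \<in> Omega Lam"
  shows "\<eta>(x := \<eta> x - 1) \<in> Omega Lam"
  using assms Lam_down[of "\<eta> x" "\<eta> x - 1"] by (simp add: Omega_iff)

lemma annih_cong_Omega:
  assumes Lam_down: "\<And>k j. k \<in> Lam \<Longrightarrow> j \<le> k \<Longrightarrow> j \<in> Lam"
    and "\<And>\<zeta>. \<zeta> \<in> Omega Lam \<Longrightarrow> g1 \<zeta> = g2 \<zeta>" "\<eta> \<in> Omega Lam"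
  shows "annih g1 \<eta> = annih g2 \<eta>"
proof -
  have "g1 (\<eta>(x := \<eta> x - 1)) = g2 (\<eta>(x := \<eta> x - 1))" for x
    using Omega_remove_particle[OF Lam_down assms(3)] by (rule assms(2))
  then show ?thesis by (simp only: annih_def)
qed

lemma gen_cong_Omega_n:
  assumes "\<And>\<zeta>. \<zeta> \<in> Omega_n Lam (\<Sum>x\<in>UNIV. \<eta> x) \<Longrightarrow> g1 \<zeta> = g2 \<zeta>" "g1 \<eta> = g2 \<eta>"
  shows "gen Lam q g1 \<eta> = gen Lam q g2 \<eta>"
  unfolding gen_def using assms by simp

lemma gen_cong_Omega:
  assumes "\<And>\<zeta>. \<zeta> \<in> Omega Lam \<Longrightarrow> g1 \<zeta> = g2 \<zeta>" "\<eta> \<in> Omega Lam"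
  shows "gen Lam q g1 \<eta> = gen Lam q g2 \<eta>"
  using assms Omega_n_subset_Omega by (intro gen_cong_Omega_n) auto

lemma gen_pow_cong_Omega_n:
  assumes "\<And>\<zeta>. \<zeta> \<in> Omega_n Lam N \<Longrightarrow> g1 \<zeta> = g2 \<zeta>" "\<eta> \<in> Omega_n Lam N"
  shows "(gen Lam q ^^ k) g1 \<eta> = (gen Lam q ^^ k) g2 \<eta>"
  using assms(2)
proof (induction k arbitrary: \<eta>)
  case 0
  then show ?case using assms(1) by simp
next
  case (Suc k)
  then have "(\<Sum>x\<in>UNIV. \<eta> x) = N" by (simp add: Omega_n_def)
  with Suc show ?case
    unfolding funpow.simps comp_def by (intro gen_cong_Omega_n) simp_all
qed

lemma gen_pow_cmult: "(gen Lam q ^^ k) (\<lambda>\<zeta>. c * g \<zeta>) = (\<lambda>\<eta>. c * (gen Lam q ^^ k) g \<eta>)"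
proof -
  have "gen Lam q (\<lambda>\<zeta>. c * g \<zeta>) = (\<lambda>\<eta>. c * gen Lam q g \<eta>)" for g
    by (rule ext) (simp add: gen_def sum_distrib_left algebra_simps)
  then show ?thesis by (induction k) simp_all
qed

lemma funpow_commute_on:
  fixes A B :: "('a \<Rightarrow> 'b) \<Rightarrow> 'a \<Rightarrow> 'b"
  assumes A_cong: "\<And>g1 g2 \<eta>. (\<And>\<zeta>. \<zeta> \<in> X \<Longrightarrow> g1 \<zeta> = g2 \<zeta>) \<Longrightarrow> \<eta> \<in> X \<Longrightarrow> A g1 \<eta> = A g2 \<eta>"
    and B_cong: "\<And>g1 g2 \<eta>. (\<And>\<zeta>. \<zeta> \<in> X \<Longrightarrow> g1 \<zeta> = g2 \<zeta>) \<Longrightarrow> \<eta> \<in> X \<Longrightarrow> B g1 \<eta> = B g2 \<eta>"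
    and commute: "\<And>g \<eta>. \<eta> \<in> X \<Longrightarrow> A (B g) \<eta> = B (A g) \<eta>"
    and "\<eta> \<in> X"
  shows "(A ^^ k) ((B ^^ j) g) \<eta> = (B ^^ j) ((A ^^ k) g) \<eta>"
proof -
  have A_commute: "A ((B ^^ j) g) \<eta> = (B ^^ j) (A g) \<eta>" if "\<eta> \<in> X" for g \<eta>
    using that
  proof (induction j arbitrary: \<eta>)
    case (Suc j)
    then have "A ((B ^^ Suc j) g) \<eta> = B (A ((B ^^ j) g)) \<eta>"
      by (simp add: commute)
    also have "\<dots> = B ((B ^^ j) (A g)) \<eta>"
      using Suc by (intro B_cong)
    finally show ?case by simp
  qed simp
  show ?thesis
    using \<open>\<eta> \<in> X\<close>
  proof (induction k arbitrary: \<eta>)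
    case (Suc k)
    have "(A ^^ Suc k) ((B ^^ j) g) \<eta> = A ((B ^^ j) ((A ^^ k) g)) \<eta>"
      using Suc by (simp only: funpow.simps comp_def) (intro A_cong)
    also have "\<dots> = (B ^^ j) (A ((A ^^ k) g)) \<eta>"
      using Suc.prems by (rule A_commute)
    finally show ?case by simp
  qed simp
qed

lemma gen_pow_annih_pow_commute:
  assumes Lam_down: "\<And>k j. k \<in> Lam \<Longrightarrow> j \<le> k \<Longrightarrow> j \<in> Lam"
    and cons: "consistent Lam q" and "\<eta> \<in> Omega Lam"
  shows "(gen Lam q ^^ k) ((annih ^^ j) f) \<eta> = (annih ^^ j) ((gen Lam q ^^ k) f) \<eta>"
proof (rule funpow_commute_on[where X = "Omega Lam"])
  show "gen Lam q (annih g) \<zeta> = annih (gen Lam q g) \<zeta>" if "\<zeta> \<in> Omega Lam" for g \<zeta>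
    using cons that by (simp add: consistent_def)
qed (rule gen_cong_Omega annih_cong_Omega[OF Lam_down] assms(3); assumption)+

lemma abs_gen_le:
  fixes \<eta> :: "'v::finite \<Rightarrow> nat"
  assumes "\<And>\<zeta>. \<zeta> \<in> insert \<eta> (Omega_n Lam (\<Sum>x\<in>UNIV. \<eta> x)) \<Longrightarrow> \<bar>g \<zeta>\<bar> \<le> B"
  shows "\<bar>gen Lam q g \<eta>\<bar> \<le> 2 * (\<Sum>\<zeta>\<in>Omega_n Lam (\<Sum>x\<in>UNIV. \<eta> x). \<bar>q \<eta> \<zeta>\<bar>) * B"
proof -
  let ?Om = "Omega_n Lam (\<Sum>x\<in>UNIV. \<eta> x) :: ('v \<Rightarrow> nat) set"
  have "\<bar>gen Lam q g \<eta>\<bar> \<le> (\<Sum>\<zeta>\<in>?Om. \<bar>q \<eta> \<zeta>\<bar> * \<bar>g \<zeta> - g \<eta>\<bar>)"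
    unfolding gen_def abs_mult[symmetric] by (rule sum_abs)
  also have "\<dots> \<le> (\<Sum>\<zeta>\<in>?Om. \<bar>q \<eta> \<zeta>\<bar> * (2 * B))"
  proof (intro sum_mono mult_left_mono)
    fix \<zeta> assume "\<zeta> \<in> ?Om"
    then have "\<bar>g \<zeta>\<bar> \<le> B" "\<bar>g \<eta>\<bar> \<le> B" by (auto intro: assms)
    then show "\<bar>g \<zeta> - g \<eta>\<bar> \<le> 2 * B" by arith
  qed simp
  also have "\<dots> = 2 * (\<Sum>\<zeta>\<in>?Om. \<bar>q \<eta> \<zeta>\<bar>) * B"
    by (simp add: sum_distrib_left sum_distrib_right mult_ac)
  finally show ?thesis .
qed

lemma gen_pow_bounded:
  fixes \<eta> :: "'v::finite \<Rightarrow> nat"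
  shows "\<exists>C B. \<forall>k. \<bar>(gen Lam q ^^ k) f \<eta>\<bar> \<le> C ^ k * B"
proof -
  \<comment> \<open>Only the finitely many configurations with the particle number of \<open>\<eta>\<close> are involved.\<close>
  define Om where "Om = (Omega_n Lam (\<Sum>x\<in>UNIV. \<eta> x) :: ('v \<Rightarrow> nat) set)"
  define T where "T = insert \<eta> Om"
  define C where "C = 2 * (\<Sum>\<zeta>\<in>T. \<Sum>\<zeta>'\<in>Om. \<bar>q \<zeta> \<zeta>'\<bar>)"
  define B where "B = (\<Sum>\<zeta>\<in>T. \<bar>f \<zeta>\<bar>)"
  have "finite T" unfolding T_def Om_def by (simp add: finite_Omega_n)
  have mass: "Omega_n Lam (\<Sum>x\<in>UNIV. \<zeta> x) = Om" if "\<zeta> \<in> T" for \<zeta>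
    using that unfolding T_def Om_def by (auto simp: Omega_n_def)
  have "C \<ge> 0" "B \<ge> 0" unfolding C_def B_def by (simp_all add: sum_nonneg)
  have row_le: "2 * (\<Sum>\<zeta>'\<in>Om. \<bar>q \<zeta> \<zeta>'\<bar>) \<le> C" if "\<zeta> \<in> T" for \<zeta>
    unfolding C_def using that \<open>finite T\<close> by (auto intro!: member_le_sum sum_nonneg)
  have "\<bar>(gen Lam q ^^ k) f \<zeta>\<bar> \<le> C ^ k * B" if "\<zeta> \<in> T" for k \<zeta>
    using that
  proof (induction k arbitrary: \<zeta>)
    case 0
    then show ?case unfolding B_def using \<open>finite T\<close> by (auto intro: member_le_sum)
  next
    case (Suc k)
    have "insert \<zeta> Om \<subseteq> T" using Suc.prems by (auto simp: T_def)
    then have "\<bar>(gen Lam q ^^ Suc k) f \<zeta>\<bar> \<le> 2 * (\<Sum>\<zeta>'\<in>Om. \<bar>q \<zeta> \<zeta>'\<bar>) * (C ^ k * B)"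
      using abs_gen_le[of \<zeta> Lam "(gen Lam q ^^ k) f" "C ^ k * B" q] Suc by (auto simp: mass)
    also have "\<dots> \<le> C * (C ^ k * B)"
      using Suc.prems \<open>C \<ge> 0\<close> \<open>B \<ge> 0\<close> by (intro mult_right_mono row_le) simp_all
    finally show ?case by simp
  qed
  then show ?thesis by (auto simp: T_def)
qed

lemma summable_expect_series:
  fixes \<eta> :: "'v::finite \<Rightarrow> nat"
  shows "summable (\<lambda>k. t ^ k / fact k * (gen Lam q ^^ k) f \<eta>)"
proof -
  obtain C B where bound: "\<And>k. \<bar>(gen Lam q ^^ k) f \<eta>\<bar> \<le> C ^ k * B"
    using gen_pow_bounded by blast
  have "summable (\<lambda>k. B * (inverse (fact k) * (\<bar>t\<bar> * C) ^ k))"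
    by (intro summable_mult summable_exp)
  then show ?thesis
  proof (rule summable_comparison_test')
    fix k
    have "\<bar>t\<bar> ^ k / fact k * \<bar>(gen Lam q ^^ k) f \<eta>\<bar> \<le> \<bar>t\<bar> ^ k / fact k * (C ^ k * B)"
      using bound by (intro mult_left_mono) auto
    then show "norm (t ^ k / fact k * (gen Lam q ^^ k) f \<eta>) \<le> B * (inverse (fact k) * (\<bar>t\<bar> * C) ^ k)"
      by (simp add: abs_mult power_abs power_mult_distrib field_simps)
  qed
qed

lemma gen_pow_Fdual_phi:
  fixes \<xi> :: "'v::finite \<Rightarrow> nat"
  assumes Lam_down: "\<And>k j. k \<in> Lam \<Longrightarrow> j \<le> k \<Longrightarrow> j \<in> Lam"
    and cons: "consistent Lam q"
    and xs: "xs \<in> V_n Lam n"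
    and mass_\<xi>: "(\<Sum>y\<in>UNIV. \<xi> y) = m" "m \<le> n"
  shows "(gen Lam q ^^ k) (Fdual \<xi>) (phi xs)
       = (\<Sum>I | I \<subseteq> {..<n} \<and> card I = m.
            (gen Lam q ^^ k) (\<lambda>\<zeta>. if \<zeta> = \<xi> then 1 else 0) (phi (nths xs I)))"
proof -
  define j where "j = n - m"
  define ind where "ind = (\<lambda>\<zeta>::'v \<Rightarrow> nat. if \<zeta> = \<xi> then 1 else (0::real))"
  have len: "length xs = n" and phi_xs: "phi xs \<in> Omega_n Lam n"
    using xs by (auto simp: V_n_def)
  have level: "fact j * Fdual \<xi> \<zeta> = (annih ^^ j) ind \<zeta>" if "\<zeta> \<in> Omega_n Lam n" for \<zeta>
    using that mass_\<xi> unfolding ind_def j_def by (simp add: Omega_n_def annih_pow_indicator)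
  have "fact j * (gen Lam q ^^ k) (Fdual \<xi>) (phi xs) = (gen Lam q ^^ k) (\<lambda>\<zeta>. fact j * Fdual \<xi> \<zeta>) (phi xs)"
    by (simp add: gen_pow_cmult)
  also have "\<dots> = (gen Lam q ^^ k) ((annih ^^ j) ind) (phi xs)"
    using level phi_xs by (rule gen_pow_cong_Omega_n)
  also have "\<dots> = (annih ^^ j) ((gen Lam q ^^ k) ind) (phi xs)"
    using phi_xs Omega_n_subset_Omega by (intro gen_pow_annih_pow_commute[OF Lam_down cons]) auto
  also have "\<dots> = (annih ^^ j) ((gen Lam q ^^ k) ind) (occupation (nth xs) {..<n})"
    using phi_nths[of xs "{..<n}"] len by (simp add: nths_all)
  also have "\<dots> = fact j * (\<Sum>I | I \<subseteq> {..<n} \<and> card I = m. (gen Lam q ^^ k) ind (phi (nths xs I)))"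
    using mass_\<xi> len by (simp add: annih_pow_occupation j_def phi_nths Int_absorb2)
  finally show ?thesis by (simp add: ind_def)
qed

theorem theorem3p7:
  fixes Lam :: "nat set"
    and q :: "('v::finite \<Rightarrow> nat) \<Rightarrow> ('v \<Rightarrow> nat) \<Rightarrow> real"
    and xs :: "'v list" and n m :: nat and \<xi> :: "'v \<Rightarrow> nat" and t :: real
  assumes Lam_down: "\<And>k j. k \<in> Lam \<Longrightarrow> j \<le> k \<Longrightarrow> j \<in> Lam"
    and rate: "is_rate Lam q"
    and cons: "consistent Lam q"
    and xs: "xs \<in> V_n Lam n"
    and m: "1 \<le> m" "m \<le> n - 1"
    and xi: "\<xi> \<in> Omega_n Lam m"
    and t: "0 \<le> t"
  shows "expect Lam q t (Fdual \<xi>) (phi xs)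
         = (\<Sum>I\<in>{I. I \<subseteq> {..<n} \<and> card I = m}. prob_at Lam q t (phi (nths xs I)) \<xi>)"
proof -
  let ?\<I> = "{I. I \<subseteq> {..<n} \<and> card I = m}"
  let ?ind = "\<lambda>\<zeta>. if \<zeta> = \<xi> then 1 else (0::real)"
  let ?term = "\<lambda>I k. t ^ k / fact k * (gen Lam q ^^ k) ?ind (phi (nths xs I))"
  have "(\<Sum>y\<in>UNIV. \<xi> y) = m" "m \<le> n" using xi m by (auto simp: Omega_n_def)
  then have "expect Lam q t (Fdual \<xi>) (phi xs) = (\<Sum>k. \<Sum>I\<in>?\<I>. ?term I k)"
    unfolding expect_def by (simp add: gen_pow_Fdual_phi[OF Lam_down cons xs] sum_distrib_left)
  also have "\<dots> = (\<Sum>I\<in>?\<I>. \<Sum>k. ?term I k)"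
    by (rule suminf_sum) (rule summable_expect_series)
  finally show ?thesis by (simp add: prob_at_def expect_def)
qed

end
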